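(* Let $k$ be a field of characteristic $0$ and let $F(X,Y), G(X,Y)\in k[X,Y]$ have total degree at most $n$ and satisfy $\det\begin{pmatrix}\partial F/\partial X & \partial F/\partial Y\\ \partial G/\partial X & \partial G/\partial Y\end{pmatrix}\in k^*$. Let $\mathcal{U}(t)=X+\sum_{i\ge1}u_i(X,Y)t^i$ and $\mathcal{V}(t)=Y+\sum_{i\ge1}v_i(X,Y)t^i$ (with $u_i,v_i\in k[X,Y]$) be the unique solution in $k[X,Y][[t]]$ of the system $$F(\mathcal{U}(t),\mathcal{V}(t))=tX+(1-t)F(X,Y),\qquad G(\mathcal{U}(t),\mathcal{V}(t))=tY+(1-t)G(X,Y),\qquad \mathcal{U}(0)=X,\ \mathcal{V}(0)=Y.$$ Let $\phi,\tau:k[X,Y]\to k[X,Y]$ be the $k$-algebra morphisms determined by $\phi(X)=F(X,Y)$, $\phi(Y)=G(X,Y)$, $\tau(X)=X+\sum_{i=1}^n u_i(X,Y)$, $\tau(Y)=Y+\sum_{i=1}^n v_i(X,Y)$. Then $\phi$ has a polynomial inverse (i.e. is an automorphism of $k[X,Y]$) if and only if $\phi\circ\tau=\mathrm{id}_{k[X,Y]}=\tau\circ\phi$.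
   Context: The existence and uniqueness of the power series solution $(\mathcal{U}(t),\mathcal{V}(t))$ under the Jacobian hypothesis is part of the setting (it holds). $k^*$ denotes the nonzero elements of $k$. *)

theory Defs
  imports "HOL-Computational_Algebra.Computational_Algebra"
begin

text \<open>Bivariate polynomials k[X,Y] are represented as (k[X])[Y], i.e. 'a poly poly:
  the outer variable is Y, the inner variable is X.\<close>

type_synonym 'a bipoly = "'a poly poly"

definition varX :: "'a::comm_ring_1 bipoly" where
  "varX = [:[:0, 1:]:]"

definition varY :: "'a::comm_ring_1 bipoly" where
  "varY = [:0, 1:]"

definition bconst :: "'a::comm_ring_1 \<Rightarrow> 'a bipoly" where
  "bconst c = [:[:c:]:]"

definition bcoeff :: "'a::zero bipoly \<Rightarrow> nat \<Rightarrow> nat \<Rightarrow> 'a" where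
  "bcoeff F i j = coeff (coeff F j) i"

definition total_degree_le :: "'a::zero bipoly \<Rightarrow> nat \<Rightarrow> bool" where
  "total_degree_le F n \<longleftrightarrow> (\<forall>i j. bcoeff F i j \<noteq> 0 \<longrightarrow> i + j \<le> n)"

definition beval :: "('a::zero \<Rightarrow> 'b::comm_ring_1) \<Rightarrow> 'a bipoly \<Rightarrow> 'b \<Rightarrow> 'b \<Rightarrow> 'b" where
  "beval c F a b = poly (map_poly (\<lambda>p. poly (map_poly c p) a) F) b"

definition dX :: "'a::idom bipoly \<Rightarrow> 'a bipoly" where
  "dX F = map_poly pderiv F"

definition dY :: "'a::idom bipoly \<Rightarrow> 'a bipoly" where
  "dY F = pderiv F"

definition jacobian :: "'a::idom bipoly \<Rightarrow> 'a bipoly \<Rightarrow> 'a bipoly" where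
  "jacobian F G = dX F * dY G - dY F * dX G"

definition bsubst :: "'a::comm_ring_1 bipoly \<Rightarrow> 'a bipoly \<Rightarrow> 'a bipoly \<Rightarrow> 'a bipoly" where
  "bsubst P Q H = beval bconst H P Q"

definition fconst :: "'a::comm_ring_1 \<Rightarrow> 'a bipoly fps" where
  "fconst c = fps_const (bconst c)"

end

theory Submission
  imports Defs
begin

text \<open>If \<phi> = (F,G) has an inverse (P,Q), substituting the solution into P gives
  U = P(F(U,V), G(U,V)) = P(tX + (1-t)F, tY + (1-t)G), a polynomial in t of degree at most the
  total degree of P whose value at t = 1 is P; likewise V and Q. The inverse of a plane
  automorphism of degree at most n again has degree at most n, so the truncations defining \<tau>
  are exactly P and Q, i.e. \<tau> = \<phi>^-1. The converse is trivial. The Jacobian condition and the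
  initial values of U and V only serve to make the solution exist and are not used.\<close>

definition is_ring_hom :: "('a::comm_ring_1 \<Rightarrow> 'b::comm_ring_1) \<Rightarrow> bool" where
  "is_ring_hom f \<longleftrightarrow>
     f 0 = 0 \<and> f 1 = 1 \<and> (\<forall>x y. f (x + y) = f x + f y) \<and> (\<forall>x y. f (x * y) = f x * f y)"

lemma is_ring_homD:
  assumes "is_ring_hom f"
  shows "f 0 = 0" "f 1 = 1" "f (x + y) = f x + f y" "f (x * y) = f x * f y"
  using assms unfolding is_ring_hom_def by auto

lemma is_ring_hom_sum: "is_ring_hom f \<Longrightarrow> f (sum g A) = (\<Sum>x\<in>A. f (g x))"
  by (induction A rule: infinite_finite_induct) (auto simp: is_ring_homD)

lemma is_ring_hom_power: "is_ring_hom f \<Longrightarrow> f (x ^ n) = f x ^ n"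
  by (induction n) (auto simp: is_ring_homD)

lemma is_ring_hom_comp: "is_ring_hom f \<Longrightarrow> is_ring_hom g \<Longrightarrow> is_ring_hom (\<lambda>x. f (g x))"
  unfolding is_ring_hom_def by auto

lemma is_ring_hom_id: "is_ring_hom (\<lambda>x. x)"
  unfolding is_ring_hom_def by auto

lemma is_ring_hom_map_poly:
  assumes f: "is_ring_hom f"
  shows "is_ring_hom (map_poly f)"
  unfolding is_ring_hom_def
proof (intro conjI allI)
  fix x y
  show "map_poly f (x + y) = map_poly f x + map_poly f y"
    by (rule poly_eqI) (simp add: coeff_map_poly is_ring_homD[OF f])
  show "map_poly f (x * y) = map_poly f x * map_poly f y"
    by (rule poly_eqI) (simp add: coeff_map_poly is_ring_homD[OF f] coeff_mult is_ring_hom_sum[OF f])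
qed (simp_all add: is_ring_homD[OF f])

lemma is_ring_hom_poly: "is_ring_hom (\<lambda>p. poly p a)"
  unfolding is_ring_hom_def by auto

lemma is_ring_hom_pCons_const: "is_ring_hom (\<lambda>x::'a::comm_ring_1. [:x:])"
  unfolding is_ring_hom_def by (auto simp: one_pCons)

lemma is_ring_hom_pcompose: "is_ring_hom (\<lambda>p. pcompose p q)"
  unfolding is_ring_hom_def by (simp add: pcompose_add pcompose_mult pcompose_1)

lemma is_ring_hom_fps_of_poly: "is_ring_hom fps_of_poly"
  unfolding is_ring_hom_def by (simp add: fps_of_poly_add fps_of_poly_mult)

lemma is_ring_hom_bconst: "is_ring_hom (bconst :: 'a::comm_ring_1 \<Rightarrow> _)"
  unfolding is_ring_hom_def bconst_def by (auto simp: one_pCons)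

lemma is_ring_hom_fconst: "is_ring_hom (fconst :: 'a::comm_ring_1 \<Rightarrow> _)"
  unfolding is_ring_hom_def fconst_def bconst_def
  by (auto simp: one_pCons fps_const_add fps_const_mult)

lemma is_ring_hom_beval: "is_ring_hom c \<Longrightarrow> is_ring_hom (\<lambda>H. beval c H a b)"
  unfolding beval_def
  by (intro is_ring_hom_comp[OF is_ring_hom_poly] is_ring_hom_map_poly)

lemma is_ring_hom_bsubst: "is_ring_hom (bsubst A B)"
  unfolding bsubst_def[abs_def] by (rule is_ring_hom_beval[OF is_ring_hom_bconst])

section \<open>Substitution in bivariate polynomials\<close>

lemma beval_bconst: "is_ring_hom c \<Longrightarrow> beval c (bconst x) a b = c x"
  by (simp add: beval_def bconst_def is_ring_homD map_poly_pCons)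

lemma beval_varX: "is_ring_hom c \<Longrightarrow> beval c varX a b = a"
  by (simp add: beval_def varX_def is_ring_homD map_poly_pCons)

lemma beval_varY: "is_ring_hom c \<Longrightarrow> beval c varY a b = b"
  by (simp add: beval_def varY_def is_ring_homD map_poly_pCons)

lemma beval_pCons:
  "c 0 = 0 \<Longrightarrow> beval c (pCons h H) a b = poly (map_poly c h) a + b * beval c H a b"
  by (simp add: beval_def map_poly_pCons)

lemma beval_zero_zero: "is_ring_hom c \<Longrightarrow> beval c H 0 0 = c (bcoeff H 0 0)"
  by (simp add: beval_def poly_0_coeff_0 coeff_map_poly is_ring_homD bcoeff_def)

lemma pCons_const_eq_sum: "[:h:] = (\<Sum>i\<le>degree h. bconst (coeff h i) * varX ^ i)"
proof -
  have "[:h:] = (\<Sum>i\<le>degree h. [:monom (coeff h i) i:])"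
    by (subst poly_as_sum_of_monoms[symmetric, of h]) (simp add: is_ring_hom_sum[OF is_ring_hom_pCons_const])
  also have "\<dots> = (\<Sum>i\<le>degree h. bconst (coeff h i) * varX ^ i)"
    by (simp add: bconst_def varX_def monom_altdef is_ring_hom_power[OF is_ring_hom_pCons_const, symmetric])
  finally show ?thesis .
qed

lemma bipoly_ring_hom_eqI:
  assumes "is_ring_hom \<Phi>" "is_ring_hom \<Psi>" "\<And>x. \<Phi> (bconst x) = \<Psi> (bconst x)"
    and "\<Phi> varX = \<Psi> varX" "\<Phi> varY = \<Psi> varY"
  shows "\<Phi> H = \<Psi> H"
proof (induction H)
  case 0
  then show ?case using assms by (simp add: is_ring_homD)
next
  case (pCons h H)
  have "\<Phi> [:h:] = \<Psi> [:h:]"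
    by (subst (1 2) pCons_const_eq_sum) (simp add: is_ring_hom_sum is_ring_homD is_ring_hom_power assms)
  moreover have "pCons h H = [:h:] + varY * H" by (simp add: varY_def)
  ultimately show ?case using pCons by (simp add: is_ring_homD assms)
qed

lemma beval_ring_hom_commute:
  assumes c: "is_ring_hom c" and h: "is_ring_hom h"
  shows "h (beval c H a b) = beval (\<lambda>x. h (c x)) H (h a) (h b)"
proof -
  have hc: "is_ring_hom (\<lambda>x. h (c x))" by (rule is_ring_hom_comp[OF h c])
  show ?thesis
    by (rule bipoly_ring_hom_eqI)
      (simp_all add: c hc is_ring_hom_comp[OF h is_ring_hom_beval[OF c]] is_ring_hom_beval
        beval_bconst beval_varX beval_varY)
qed

lemma bsubst_bconst: "bsubst A B (bconst x) = bconst x"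
  by (simp add: bsubst_def beval_bconst is_ring_hom_bconst)

lemma bsubst_varX: "bsubst A B varX = A"
  by (simp add: bsubst_def beval_varX is_ring_hom_bconst)

lemma bsubst_varY: "bsubst A B varY = B"
  by (simp add: bsubst_def beval_varY is_ring_hom_bconst)

lemma beval_bsubst:
  assumes c: "is_ring_hom c"
  shows "beval c (bsubst A B H) a b = beval c H (beval c A a b) (beval c B a b)"
  by (rule bipoly_ring_hom_eqI[where \<Phi>="\<lambda>H. beval c (bsubst A B H) a b"])
    (simp_all add: c is_ring_hom_beval is_ring_hom_comp[OF is_ring_hom_beval[OF c] is_ring_hom_bsubst]
      beval_bconst bsubst_bconst bsubst_varX bsubst_varY beval_varX beval_varY)

lemma bsubst_varX_varY: "bsubst varX varY H = H"
  by (rule bipoly_ring_hom_eqI[where \<Psi>="\<lambda>x. x"])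
    (simp_all add: is_ring_hom_id is_ring_hom_bsubst bsubst_bconst bsubst_varX bsubst_varY)

definition bswap :: "'a::comm_ring_1 bipoly \<Rightarrow> 'a bipoly" where
  "bswap H = bsubst varY varX H"

lemma bsubst_bswap: "bsubst A B (bswap H) = bsubst B A H"
  by (simp add: bswap_def bsubst_def[of A B] beval_bsubst is_ring_hom_bconst)
    (simp add: bsubst_def[symmetric] bsubst_varX bsubst_varY)

lemma bswap_bsubst: "bswap (bsubst A B H) = bsubst (bswap A) (bswap B) H"
  by (simp add: bswap_def bsubst_def[of varY varX] beval_bsubst is_ring_hom_bconst)
    (simp add: bsubst_def[symmetric])

lemma bswap_varX: "bswap varX = varY"
  by (simp add: bswap_def bsubst_varX)

lemma bcoeff_bswap: "bcoeff (bswap H) i j = bcoeff H j i"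
proof (induction H arbitrary: i)
  case 0
  then show ?case by (simp add: bswap_def bsubst_def beval_def bcoeff_def)
next
  case (pCons h H)
  have "bswap [:h:] = poly (map_poly bconst h) varY"
    using beval_pCons[of bconst h 0 varY varX]
    by (simp add: bswap_def bsubst_def is_ring_homD[OF is_ring_hom_bconst]
        is_ring_homD[OF is_ring_hom_beval[OF is_ring_hom_bconst]])
  also have "map_poly bconst h = map_poly (\<lambda>x. [:x:]) (map_poly (\<lambda>x. [:x:]) h)"
    by (simp add: map_poly_map_poly o_def bconst_def[abs_def])
  finally have "bswap [:h:] = map_poly (\<lambda>x. [:x:]) h"
    by (simp add: varY_def pcompose_altdef[symmetric])
  moreover have "bswap (pCons h H) = bswap [:h:] + varX * bswap H"
  proof -
    have "pCons h H = [:h:] + varY * H" by (simp add: varY_def)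
    then show ?thesis by (simp add: bswap_def is_ring_homD[OF is_ring_hom_bsubst] bsubst_varY)
  qed
  ultimately show ?case
    using pCons.IH by (cases i) (simp_all add: bcoeff_def varX_def coeff_map_poly)
qed

lemma total_degree_le_bswap: "total_degree_le (bswap H) n \<longleftrightarrow> total_degree_le H n"
  by (metis add.commute bcoeff_bswap total_degree_le_def)

lemma poly_eq_sum_atMost:
  fixes x :: "'a::comm_semiring_1"
  assumes "degree p \<le> N"
  shows "poly p x = (\<Sum>i\<le>N. coeff p i * x ^ i)"
proof -
  have "poly p x = (\<Sum>i\<le>degree p. coeff p i * x ^ i)" by (rule poly_altdef)
  also have "\<dots> = (\<Sum>i\<le>N. coeff p i * x ^ i)"
    by (rule sum.mono_neutral_left) (use assms in \<open>auto simp: coeff_eq_0\<close>)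
  finally show ?thesis .
qed

lemma beval_eq_sum:
  assumes c: "is_ring_hom c"
  shows "beval c H a b =
    (\<Sum>j\<le>degree H. (\<Sum>i\<le>degree (coeff H j). c (bcoeff H i j) * a ^ i) * b ^ j)"
proof -
  let ?f = "\<lambda>p. poly (map_poly c p) a"
  have "beval c H a b = (\<Sum>j\<le>degree H. ?f (coeff H j) * b ^ j)"
    unfolding beval_def
    by (subst poly_eq_sum_atMost[OF map_poly_degree_leq]) (simp add: coeff_map_poly)
  also have "\<dots> = (\<Sum>j\<le>degree H. (\<Sum>i\<le>degree (coeff H j). c (bcoeff H i j) * a ^ i) * b ^ j)"
    by (subst poly_eq_sum_atMost[OF map_poly_degree_leq])
      (simp add: c coeff_map_poly is_ring_homD bcoeff_def)
  finally show ?thesis .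
qed

lemma degree_beval_le:
  fixes c :: "'a::comm_ring_1 \<Rightarrow> 'b::comm_ring_1 poly"
  assumes c: "is_ring_hom c" and c0: "\<And>x. degree (c x) = 0"
    and a: "degree a \<le> 1" and b: "degree b \<le> 1" and H: "total_degree_le H n"
  shows "degree (beval c H a b) \<le> n"
  unfolding beval_eq_sum[OF c] sum_distrib_right
proof (intro degree_sum_le finite_atMost)
  fix i j
  show "degree (c (bcoeff H i j) * a ^ i * b ^ j) \<le> n"
  proof (cases "bcoeff H i j = 0")
    case True
    then show ?thesis by (simp add: c is_ring_homD)
  next
    case False
    have "degree (c (bcoeff H i j) * a ^ i * b ^ j) \<le> degree (c (bcoeff H i j)) + degree a * i + degree b * j"
      by (intro order.trans[OF degree_mult_le] add_mono order.trans[OF degree_power_le] order.refl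
          degree_mult_le[THEN order.trans])
    also have "\<dots> \<le> i + j" using a b c0 by (simp add: add_mono)
    also have "\<dots> \<le> n" using False H by (auto simp: total_degree_le_def)
    finally show ?thesis .
  qed
qed

lemma diff_dvd_power_diff: "x - y dvd x ^ n - (y::'a::comm_ring_1) ^ n"
  unfolding power_diff_sumr2 by simp

lemma diff_dvd_beval_diff_fst:
  assumes "is_ring_hom c"
  shows "a - a' dvd beval c H a b - beval c H a' b"
  unfolding beval_eq_sum[OF assms] sum_subtractf[symmetric] left_diff_distrib[symmetric]
    right_diff_distrib[symmetric]
  by (intro dvd_sum dvd_mult2 dvd_mult diff_dvd_power_diff)

section \<open>The truncated solution series\<close>

text \<open>Along the segment from (A,B) at t = 0 to (A',B') at t = 1 a polynomial of total degree
  at most n becomes a polynomial in t of degree at most n, so its first n + 1 coefficients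
  add up to its value at t = 1.\<close>

lemma sum_fps_nth_beval_segment:
  fixes P :: "'a::comm_ring_1 bipoly"
  assumes deg: "total_degree_le P n"
  shows "(\<Sum>i\<le>n. fps_nth (beval fconst P (fps_X * fps_const A' + (1 - fps_X) * fps_const A)
                                      (fps_X * fps_const B' + (1 - fps_X) * fps_const B)) i)
    = bsubst A' B' P"
proof -
  define R where "R = beval (\<lambda>x. [:bconst x:]) P [:A, A' - A:] [:B, B' - B:]"
  have c: "is_ring_hom (\<lambda>x::'a. [:bconst x:])"
    by (rule is_ring_hom_comp[OF is_ring_hom_pCons_const is_ring_hom_bconst])
  have "fps_of_poly R = beval (\<lambda>x. fps_of_poly [:bconst x:]) P
      (fps_of_poly [:A, A' - A:]) (fps_of_poly [:B, B' - B:])"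
    unfolding R_def by (rule beval_ring_hom_commute[OF c is_ring_hom_fps_of_poly])
  also have "\<dots> = beval fconst P (fps_X * fps_const A' + (1 - fps_X) * fps_const A)
                                (fps_X * fps_const B' + (1 - fps_X) * fps_const B)"
    by (simp add: fps_of_poly_const fconst_def[abs_def] fps_of_poly_pCons algebra_simps
        flip: fps_const_sub)
  finally have R: "\<dots> = fps_of_poly R" ..
  have "degree R \<le> n"
    unfolding R_def by (rule degree_beval_le[OF c _ _ _ deg]) simp_all
  then have "(\<Sum>i\<le>n. fps_nth (fps_of_poly R) i) = poly R 1"
    by (simp add: poly_eq_sum_atMost)
  also have "\<dots> = bsubst A' B' P"
    unfolding R_def beval_ring_hom_commute[OF c is_ring_hom_poly] by (simp add: bsubst_def)
  finally show ?thesis by (simp add: R)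
qed

lemma sum_fps_nth_solution_component:
  fixes F G P H :: "'a::comm_ring_1 bipoly"
  assumes deg: "total_degree_le P n" and FGP: "bsubst F G P = H"
    and eqF: "beval fconst F U V = fps_X * fps_const varX + (1 - fps_X) * fps_const F"
    and eqG: "beval fconst G U V = fps_X * fps_const varY + (1 - fps_X) * fps_const G"
  shows "(\<Sum>i\<le>n. fps_nth (beval fconst H U V) i) = P"
proof -
  have "beval fconst H U V = beval fconst P (fps_X * fps_const varX + (1 - fps_X) * fps_const F)
                                          (fps_X * fps_const varY + (1 - fps_X) * fps_const G)"
    by (simp add: beval_bsubst is_ring_hom_fconst eqF eqG flip: FGP)
  then show ?thesis using sum_fps_nth_beval_segment[OF deg] by (simp add: bsubst_varX_varY)
qed

section \<open>Degree of the inverse\<close>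

interpretation poly_vs: vector_space "smult :: 'a::field \<Rightarrow> 'a poly \<Rightarrow> 'a poly"
  by unfold_locales (simp_all add: smult_add_right smult_add_left)

lemma poly_vs_independent_monoms: "poly_vs.independent ((\<lambda>j. monom (1::'a::field) j) ` A)"
  unfolding poly_vs.independent_explicit_finite_subsets
proof (intro allI impI ballI)
  fix S :: "'a poly set" and u v
  assume S: "S \<subseteq> (\<lambda>j. monom 1 j) ` A" and "finite S"
    and sum0: "(\<Sum>w\<in>S. smult (u w) w) = 0" and "v \<in> S"
  then obtain j where v: "v = monom 1 j" by blast
  have "0 = coeff (\<Sum>w\<in>S. smult (u w) w) j" by (simp add: sum0)
  also have "\<dots> = (\<Sum>w\<in>S. if w = v then u w else 0)"
    unfolding coeff_sum
  proof (intro sum.cong refl)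
    fix w
    assume "w \<in> S"
    then obtain k where w: "w = monom 1 k" using S by blast
    show "coeff (smult (u w) w) j = (if w = v then u w else 0)"
      by (simp add: w v coeff_monom monom_eq_iff')
  qed
  also have "\<dots> = u v" using \<open>v \<in> S\<close> \<open>finite S\<close> by simp
  finally show "u v = 0" by simp
qed

lemma sum_smult_mod:
  fixes p :: "'a::field poly"
  shows "(\<Sum>i\<in>A. smult (c i) (g i)) mod p = (\<Sum>i\<in>A. smult (c i) (g i mod p))"
  by (induction A rule: infinite_finite_induct) (simp_all add: poly_mod_add_left mod_smult_left)

lemma pcompose_mod_in_span:
  fixes p q s :: "'a::field poly"
  assumes "\<forall>i\<ge>m. coeff s i = 0"
  shows "pcompose s q mod p \<in> poly_vs.span ((\<lambda>i. q ^ i mod p) ` {..<m})"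
proof -
  have "pcompose s q = (\<Sum>i<m. smult (coeff s i) (q ^ i))"
  proof (cases m)
    case 0
    then have "s = 0" using assms by (simp add: poly_eq_iff)
    then show ?thesis using 0 by simp
  next
    case (Suc m')
    then have "degree s \<le> m'" using assms by (intro degree_le) auto
    then have "degree (map_poly (\<lambda>x. [:x:]) s) \<le> m'"
      using map_poly_degree_leq order.trans by blast
    then show ?thesis
      unfolding pcompose_altdef Suc lessThan_Suc_atMost
      by (simp add: poly_eq_sum_atMost[where N=m'] coeff_map_poly)
  qed
  then have "pcompose s q mod p = (\<Sum>i<m. smult (coeff s i) (q ^ i mod p))"
    by (simp add: sum_smult_mod)
  also have "\<dots> \<in> poly_vs.span ((\<lambda>i. q ^ i mod p) ` {..<m})"
    by (intro poly_vs.span_sum poly_vs.span_scale poly_vs.span_base) auto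
  finally show ?thesis .
qed

text \<open>In k[z]/(p) the class of z is f(q), so every class is a polynomial in q; since r(q)
  vanishes there, the classes of q^i with i < deg r span the quotient, which has dimension deg p.\<close>

lemma degree_le_if_dvd_pcompose:
  fixes p q f r :: "'a::field poly"
  assumes p: "p \<noteq> 0" and r: "r \<noteq> 0" and pr: "p dvd pcompose r q"
    and pf: "p dvd pcompose f q - [:0,1:]"
  shows "degree p \<le> degree r"
proof -
  define T where "T = (\<lambda>i. q ^ i mod p) ` {..<degree r}"
  have "monom 1 j \<in> poly_vs.span T" if j: "j < degree p" for j
  proof -
    define s where "s = f ^ j mod r"
    have "p dvd [:0,1:] ^ j - pcompose f q ^ j"
      using pf[THEN dvd_diff_commute[THEN iffD1]] diff_dvd_power_diff by (rule dvd_trans)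
    moreover have "pcompose f q ^ j = pcompose (f ^ j) q"
      by (rule is_ring_hom_power[OF is_ring_hom_pcompose, symmetric])
    moreover have "pcompose (f ^ j) q - pcompose s q = pcompose r q * pcompose (f ^ j div r) q"
    proof -
      have "pcompose (f ^ j) q = pcompose (s + r * (f ^ j div r)) q"
        unfolding s_def mod_mult_div_eq ..
      then show ?thesis by (simp add: pcompose_add pcompose_mult)
    qed
    ultimately have "p dvd ([:0,1:] ^ j - pcompose (f ^ j) q) + (pcompose (f ^ j) q - pcompose s q)"
      using pr by (simp add: dvd_add)
    then have "[:0,1:] ^ j mod p = pcompose s q mod p"
      unfolding mod_eq_dvd_iff by simp
    moreover have "[:0,1:] ^ j = monom (1::'a) j" by (simp add: monom_altdef)
    moreover have "monom (1::'a) j mod p = monom 1 j"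
      by (rule mod_poly_less) (simp add: degree_monom_eq j)
    ultimately have "monom 1 j = pcompose s q mod p" by simp
    also have "\<dots> \<in> poly_vs.span T"
      unfolding T_def
    proof (rule pcompose_mod_in_span, intro allI impI)
      fix i
      assume "degree r \<le> i"
      then show "coeff s i = 0"
        using degree_mod_less[OF r, of "f ^ j"] unfolding s_def by (auto intro: coeff_eq_0)
    qed
    finally show ?thesis .
  qed
  then have "(\<lambda>j. monom 1 j) ` {..<degree p} \<subseteq> poly_vs.span T" by auto
  from poly_vs.independent_span_bound[OF _ poly_vs_independent_monoms this]
  have "card ((\<lambda>j. monom (1::'a) j) ` {..<degree p}) \<le> card T" by (simp add: T_def)
  also have "card T \<le> degree r" unfolding T_def using card_image_le[of "{..<degree r}"] by simp
  finally show ?thesis by (subst (asm) card_image) (auto simp: inj_on_def monom_eq_iff')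
qed

lemma degree_le_if_dvd_line:
  fixes p q f g :: "'a::field poly"
  assumes p: "p \<noteq> 0" and pf: "p dvd pcompose f q - [:0,1:]"
    and pg: "p dvd pcompose g q - [:0,\<beta>:]" and fg: "smult \<beta> f \<noteq> g"
    and df: "degree f \<le> n" and dg: "degree g \<le> n"
  shows "degree p \<le> n"
proof -
  define r where "r = smult \<beta> f - g"
  have "pcompose r q = smult \<beta> (pcompose f q - [:0,1:]) - (pcompose g q - [:0,\<beta>:])"
    by (simp add: r_def pcompose_diff pcompose_smult algebra_simps)
  then have pr: "p dvd pcompose r q" using pf pg by (simp add: dvd_diff dvd_smult)
  have "degree p \<le> degree r"
    by (rule degree_le_if_dvd_pcompose[OF p _ pr pf]) (use fg in \<open>simp add: r_def\<close>)
  also have "degree r \<le> n"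
    unfolding r_def using df dg degree_smult_le[of \<beta> f] degree_diff_le_max[of "smult \<beta> f" g]
    by linarith
  finally show ?thesis .
qed

lemma pcompose_beval:
  "pcompose (beval (\<lambda>x. [:x:]) H a b) q = beval (\<lambda>x. [:x:]) H (pcompose a q) (pcompose b q)"
  by (subst beval_ring_hom_commute[OF is_ring_hom_pCons_const is_ring_hom_pcompose])
    (simp add: pcompose_const)

lemma coeff_beval_line:
  "coeff (beval (\<lambda>x. [:x:]) H [:0,1:] [:0,\<beta>:]) m = (\<Sum>j\<le>m. bcoeff H (m - j) j * \<beta> ^ j)"
proof (induction H arbitrary: m)
  case 0
  then show ?case by (simp add: beval_def bcoeff_def)
next
  case (pCons h H)
  have e: "beval (\<lambda>x. [:x:]) (pCons h H) [:0,1:] [:0,\<beta>:]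
      = h + [:0,\<beta>:] * beval (\<lambda>x. [:x:]) H [:0,1:] [:0,\<beta>:]"
    by (simp add: beval_pCons pcompose_altdef[symmetric])
  show ?case
  proof (cases m)
    case 0
    then show ?thesis by (simp add: e bcoeff_def)
  next
    case (Suc m')
    have "(\<Sum>j\<le>m. bcoeff (pCons h H) (m - j) j * \<beta> ^ j)
        = bcoeff (pCons h H) m 0 + (\<Sum>j\<le>m'. bcoeff (pCons h H) (m - Suc j) (Suc j) * \<beta> ^ Suc j)"
      unfolding Suc by (subst sum.atMost_Suc_shift) simp
    also have "\<dots> = coeff h m + \<beta> * (\<Sum>j\<le>m'. bcoeff H (m' - j) j * \<beta> ^ j)"
      by (simp add: bcoeff_def Suc sum_distrib_left algebra_simps)
    finally show ?thesis using pCons.IH[of m'] by (simp add: e Suc)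
  qed
qed

lemma finite_beval_line_coeff_eq_0:
  fixes H :: "'a::idom bipoly"
  assumes "bcoeff H i j \<noteq> 0"
  shows "finite {\<beta>. coeff (beval (\<lambda>x. [:x:]) H [:0,1:] [:0,\<beta>:]) (i + j) = 0}"
proof -
  define h where "h = (\<Sum>k\<le>i + j. monom (bcoeff H (i + j - k) k) k)"
  have "coeff h j = bcoeff H i j" by (simp add: h_def coeff_sum coeff_monom)
  then have "h \<noteq> 0" using assms by auto
  moreover have "{\<beta>. coeff (beval (\<lambda>x. [:x:]) H [:0,1:] [:0,\<beta>:]) (i + j) = 0} = {\<beta>. poly h \<beta> = 0}"
    by (simp add: coeff_beval_line h_def poly_sum poly_monom)
  ultimately show ?thesis by (simp add: poly_roots_finite)
qed

lemma finite_smult_eq: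
  fixes f g :: "'a::field poly"
  assumes "f \<noteq> 0 \<or> g \<noteq> 0"
  shows "finite {\<beta>. smult \<beta> f = g}"
proof (cases "f = 0")
  case True
  then show ?thesis using assms by simp
next
  case False
  then have "{\<beta>. smult \<beta> f = g} \<subseteq> {coeff g (degree f) / lead_coeff f}" by auto
  then show ?thesis by (rule finite_subset) simp
qed

text \<open>Restrict to a line Y = \<beta> X, parametrised by z: there P and Q become univariate
  p and q with F(p,q) = z and G(p,q) = \<beta> z, and modulo p these identities read F(0,q) = z and
  G(0,q) = \<beta> z. For generic \<beta> the coefficient of z^(i+j) in p survives and
  \<beta> F(0,Y) \<noteq> G(0,Y).\<close>

lemma total_degree_le_inverse_fst:
  fixes F G P Q :: "'a::field_char_0 bipoly"
  assumes degF: "total_degree_le F n" and degG: "total_degree_le G n"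
    and PQF: "bsubst P Q F = varX" and PQG: "bsubst P Q G = varY" and FGQ: "bsubst F G Q = varY"
  shows "total_degree_le P n"
  unfolding total_degree_le_def
proof (intro allI impI)
  fix i j
  assume Pij: "bcoeff P i j \<noteq> 0"
  let ?E = "\<lambda>H a b. beval (\<lambda>x::'a. [:x:]) H a b"
  have E: "is_ring_hom (\<lambda>x::'a. [:x:])" by (rule is_ring_hom_pCons_const)
  define f where "f = ?E F 0 [:0,1:]"
  define g where "g = ?E G 0 [:0,1:]"
  have "f \<noteq> 0 \<or> g \<noteq> 0"
  proof (rule ccontr)
    assume "\<not> (f \<noteq> 0 \<or> g \<noteq> 0)"
    then have "?E Q f g = [:bcoeff Q 0 0:]" by (simp add: beval_zero_zero E)
    moreover have "?E Q f g = [:0,1:]"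
      unfolding f_def g_def beval_bsubst[OF E, symmetric] FGQ by (simp add: beval_varY E)
    ultimately show False by simp
  qed
  then have "finite ({\<beta>. coeff (?E P [:0,1:] [:0,\<beta>:]) (i + j) = 0} \<union> {\<beta>. smult \<beta> f = g})"
    using finite_beval_line_coeff_eq_0[OF Pij] finite_smult_eq by blast
  then obtain \<beta> where \<beta>P: "coeff (?E P [:0,1:] [:0,\<beta>:]) (i + j) \<noteq> 0" and \<beta>fg: "smult \<beta> f \<noteq> g"
    using ex_new_if_finite[OF infinite_UNIV_char_0] by blast
  define p where "p = ?E P [:0,1:] [:0,\<beta>:]"
  define q where "q = ?E Q [:0,1:] [:0,\<beta>:]"
  have "p \<noteq> 0" and "i + j \<le> degree p" using \<beta>P le_degree by (auto simp: p_def)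
  have Fpq: "?E F p q = [:0,1:]" and Gpq: "?E G p q = [:0,\<beta>:]"
    unfolding p_def q_def beval_bsubst[OF E, symmetric] PQF PQG by (simp_all add: beval_varX beval_varY E)
  have fq: "pcompose f q = ?E F 0 q" and gq: "pcompose g q = ?E G 0 q"
    unfolding f_def g_def pcompose_beval by (simp_all add: pcompose_pCons)
  have pf: "p dvd pcompose f q - [:0,1:]"
    using diff_dvd_beval_diff_fst[OF E, of p 0 F q] unfolding Fpq fq by (simp add: dvd_diff_commute)
  have pg: "p dvd pcompose g q - [:0,\<beta>:]"
    using diff_dvd_beval_diff_fst[OF E, of p 0 G q] unfolding Gpq gq by (simp add: dvd_diff_commute)
  have "degree f \<le> n" and "degree g \<le> n"
    unfolding f_def g_def by (intro degree_beval_le[OF E] degF degG; simp)+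
  then have "degree p \<le> n"
    by (intro degree_le_if_dvd_line[OF \<open>p \<noteq> 0\<close> pf pg \<beta>fg])
  then show "i + j \<le> n" using \<open>i + j \<le> degree p\<close> by simp
qed

lemma total_degree_le_inverse_snd:
  fixes F G P Q :: "'a::field_char_0 bipoly"
  assumes degF: "total_degree_le F n" and degG: "total_degree_le G n"
    and PQF: "bsubst P Q F = varX" and PQG: "bsubst P Q G = varY" and FGP: "bsubst F G P = varX"
  shows "total_degree_le Q n"
proof (rule total_degree_le_inverse_fst[of "bswap F" n "bswap G" Q P])
  show "bsubst (bswap F) (bswap G) P = varY"
    using FGP by (simp flip: bswap_bsubst add: bswap_varX)
qed (simp_all add: total_degree_le_bswap bsubst_bswap assms)

theorem corollary3p3:
  fixes F G :: "'a::field_char_0 bipoly" and n :: nat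
    and U V :: "'a bipoly fps"
  assumes degF: "total_degree_le F n" and degG: "total_degree_le G n"
    and jac: "\<exists>c. c \<noteq> 0 \<and> jacobian F G = bconst c"
    and U0: "fps_nth U 0 = varX" and V0: "fps_nth V 0 = varY"
    and eqF: "beval fconst F U V = fps_X * fps_const varX + (1 - fps_X) * fps_const F"
    and eqG: "beval fconst G U V = fps_X * fps_const varY + (1 - fps_X) * fps_const G"
  shows "(\<exists>P Q. bsubst F G \<circ> bsubst P Q = id \<and> bsubst P Q \<circ> bsubst F G = id)
     \<longleftrightarrow> (let tau = bsubst (\<Sum>i\<le>n. fps_nth U i) (\<Sum>i\<le>n. fps_nth V i)
          in bsubst F G \<circ> tau = id \<and> tau \<circ> bsubst F G = id)"
proof
  assume "\<exists>P Q. bsubst F G \<circ> bsubst P Q = id \<and> bsubst P Q \<circ> bsubst F G = id"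
  then obtain P Q where inv: "bsubst F G \<circ> bsubst P Q = id" "bsubst P Q \<circ> bsubst F G = id"
    by blast
  then have FGP: "bsubst F G P = varX" and FGQ: "bsubst F G Q = varY"
    and PQF: "bsubst P Q F = varX" and PQG: "bsubst P Q G = varY"
    by (metis bsubst_varX bsubst_varY comp_apply id_apply)+
  have "total_degree_le P n" by (rule total_degree_le_inverse_fst[OF degF degG PQF PQG FGQ])
  from sum_fps_nth_solution_component[OF this FGP eqF eqG]
  have sumU: "(\<Sum>i\<le>n. fps_nth U i) = P" by (simp add: beval_varX is_ring_hom_fconst)
  have "total_degree_le Q n" by (rule total_degree_le_inverse_snd[OF degF degG PQF PQG FGP])
  from sum_fps_nth_solution_component[OF this FGQ eqF eqG]
  have sumV: "(\<Sum>i\<le>n. fps_nth V i) = Q" by (simp add: beval_varY is_ring_hom_fconst)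
  show "let tau = bsubst (\<Sum>i\<le>n. fps_nth U i) (\<Sum>i\<le>n. fps_nth V i)
          in bsubst F G \<circ> tau = id \<and> tau \<circ> bsubst F G = id"
    unfolding sumU sumV using inv by simp
qed (auto simp: Let_def)

end
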